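(* In the weighted space $L^2(\rho)$ of $2\pi$-periodic functions with inner product $(f,g\rho)=\int_{-\pi}^{\pi}fg\rho\,dx$: (i) the functions $o^k(x)=\sin(kx)-\sin((k-1)x)$, $k=1,2,\dots$, form a complete orthonormal basis of the subspace of odd functions in $L^2(\rho)$; (ii) the functions $e^k(x)=\cos(kx)-\cos((k+1)x)$, $k=0,1,\dots$, form a complete orthonormal basis of the subspace of even functions in $L^2(\rho)$.
   Context: $\rho(x)=\dfrac{1}{2\pi(1-\cos x)}$. *)

theory Defs
  imports "HOL-Analysis.Analysis"
begin

text \<open>The weight rho(x) = 1/(2 pi (1 - cos x)).  (At x = 0 mod 2pi it evaluates to 0
  by Isabelle's division convention; this is a null set.)\<close>
definition rho :: "real \<Rightarrow> real" where
  "rho x = 1 / (2 * pi * (1 - cos x))"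

definition L2rho :: "(real \<Rightarrow> real) set" where
  "L2rho = {f. f \<in> borel_measurable borel \<and> (\<forall>x. f (x + 2 * pi) = f x) \<and>
               set_integrable lborel {-pi..pi} (\<lambda>x. (f x)^2 * rho x)}"

definition ip_rho :: "(real \<Rightarrow> real) \<Rightarrow> (real \<Rightarrow> real) \<Rightarrow> real" where
  "ip_rho f g = (LINT x:{-pi..pi}|lborel. f x * g x * rho x)"

definition odd_fun :: "(real \<Rightarrow> real) \<Rightarrow> bool" where
  "odd_fun f \<longleftrightarrow> (\<forall>x. f (-x) = - f x)"

definition even_fun :: "(real \<Rightarrow> real) \<Rightarrow> bool" where
  "even_fun f \<longleftrightarrow> (\<forall>x. f (-x) = f x)"

definition o_fun :: "nat \<Rightarrow> real \<Rightarrow> real" where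
  "o_fun k x = sin (real k * x) - sin ((real k - 1) * x)"

definition e_fun :: "nat \<Rightarrow> real \<Rightarrow> real" where
  "e_fun k x = cos (real k * x) - cos ((real k + 1) * x)"

definition complete_ONB_rho ::
    "((real \<Rightarrow> real) \<Rightarrow> bool) \<Rightarrow> nat set \<Rightarrow> (nat \<Rightarrow> real \<Rightarrow> real) \<Rightarrow> bool" where
  "complete_ONB_rho P I b \<longleftrightarrow>
     (\<forall>k\<in>I. b k \<in> L2rho \<and> P (b k)) \<and>
     (\<forall>j\<in>I. \<forall>k\<in>I. ip_rho (b j) (b k) = (if j = k then 1 else 0)) \<and>
     (\<forall>f\<in>L2rho. P f \<longrightarrow> (\<forall>\<epsilon>>0. \<exists>F c. finite F \<and> F \<subseteq> I \<and>
        ip_rho (\<lambda>x. f x - (\<Sum>k\<in>F. c k * b k x)) (\<lambda>x. f x - (\<Sum>k\<in>F. c k * b k x)) < \<epsilon>))"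

end

theory Submission
  imports Defs
begin

(* Since 1 - cos x = 2 sin^2 (x/2), multiplication by 2 sin (x/2) is an isometry from
   L^2([-pi, pi], dx/pi) onto L^2(rho) which exchanges even and odd functions and sends
   cos ((k - 1/2) x) to o^k and sin ((k + 1/2) x) to e^k; orthonormality is then the
   product-to-sum formula.  For completeness, the quotient g = f / (2 sin (x/2)) is approximated
   in L^2 by a continuous function of the same parity vanishing at pi (truncate, take a.e. limits
   of continuous functions, use dominated convergence), and this one uniformly by half-integer
   cosines (sines).  After t = x/2 (resp. t = (pi - x)/2) these are the odd cosines
   cos ((2k+1) t) on [0, pi/2], which approximate every continuous u with u (pi/2) = 0: apply
   Stone-Weierstrass for cosine polynomials on [0, pi] to the extension of u that is
   antisymmetric about pi/2. *)

section \<open>Cosine polynomials and odd cosines\<close>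

definition cos_poly :: "(real \<Rightarrow> real) set" where
  "cos_poly = {p. \<exists>N a. p = (\<lambda>t. \<Sum>m<N. a m * cos (real m * t))}"

lemma cos_polyI: "(\<And>t. p t = (\<Sum>m<N. a m * cos (real m * t))) \<Longrightarrow> p \<in> cos_poly"
  unfolding cos_poly_def by (intro CollectI exI) auto

lemma cos_poly_pad:
  assumes "N \<le> N'"
  shows "(\<Sum>m<N. a m * cos (real m * t)) = (\<Sum>m<N'. (if m < N then a m else 0) * cos (real m * t))"
  using assms by (intro sum.mono_neutral_cong_left) auto

lemma cos_poly_add:
  assumes "p \<in> cos_poly" "q \<in> cos_poly"
  shows "(\<lambda>t. p t + q t) \<in> cos_poly"
proof -
  obtain N a M b where p: "p = (\<lambda>t. \<Sum>m<N. a m * cos (real m * t))"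
    and q: "q = (\<lambda>t. \<Sum>m<M. b m * cos (real m * t))"
    using assms unfolding cos_poly_def by blast
  let ?c = "\<lambda>m. (if m < N then a m else 0) + (if m < M then b m else 0)"
  have "p t + q t = (\<Sum>m<max N M. ?c m * cos (real m * t))" for t
    using cos_poly_pad[of N "max N M" a t] cos_poly_pad[of M "max N M" b t]
    by (simp add: p q sum.distrib distrib_right)
  then show ?thesis by (rule cos_polyI)
qed

lemma cos_poly_cos: "(\<lambda>t. c * cos (real n * t)) \<in> cos_poly"
proof -
  have "c * cos (real n * t) = (\<Sum>m<Suc n. (if m = n then c else 0) * cos (real m * t))" for t
    by (simp add: if_distrib sum.delta cong: if_cong)
  then show ?thesis by (rule cos_polyI)
qed

lemma cos_poly_sum:
  "finite A \<Longrightarrow> (\<And>i. i \<in> A \<Longrightarrow> p i \<in> cos_poly) \<Longrightarrow> (\<lambda>t. \<Sum>i\<in>A. p i t) \<in> cos_poly"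
proof (induction A rule: finite_induct)
  case empty
  show ?case using cos_poly_cos[of 0 0] by simp
next
  case (insert i A)
  then show ?case using cos_poly_add[of "p i" "\<lambda>t. \<Sum>i\<in>A. p i t"] by simp
qed

lemma cos_mult_cos_nat:
  "cos (real m * t) * cos (real n * t) =
     cos (real (m + n) * t) / 2 + cos (real (if n \<le> m then m - n else n - m) * t) / 2"
proof -
  have "cos (real m * t - real n * t) = cos (real (if n \<le> m then m - n else n - m) * t)"
  proof (cases "n \<le> m")
    case False
    then have "real m * t - real n * t = - (real (n - m) * t)"
      by (simp add: of_nat_diff algebra_simps)
    then show ?thesis using False by simp
  qed (simp add: of_nat_diff algebra_simps)
  then show ?thesis by (simp add: cos_add cos_diff algebra_simps flip: add_divide_distrib)
qed

lemma cos_poly_mult: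
  assumes "p \<in> cos_poly" "q \<in> cos_poly"
  shows "(\<lambda>t. p t * q t) \<in> cos_poly"
proof -
  obtain N a M b where p: "p = (\<lambda>t. \<Sum>m<N. a m * cos (real m * t))"
    and q: "q = (\<lambda>t. \<Sum>m<M. b m * cos (real m * t))"
    using assms unfolding cos_poly_def by blast
  have "p t * q t = (\<Sum>m<N. \<Sum>n<M. a m * b n * (cos (real m * t) * cos (real n * t)))" for t
    unfolding p q sum_product by (simp add: ac_simps)
  then have "(\<lambda>t. p t * q t) =
      (\<lambda>t. \<Sum>m<N. \<Sum>n<M. a m * b n / 2 * cos (real (m + n) * t)
                        + a m * b n / 2 * cos (real (if n \<le> m then m - n else n - m) * t))"
    unfolding cos_mult_cos_nat by (simp add: ring_distribs)
  also have "\<dots> \<in> cos_poly"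
    by (intro cos_poly_sum cos_poly_add cos_poly_cos) auto
  finally show ?thesis .
qed

lemma function_ring_on_cos_poly: "function_ring_on cos_poly {0..pi}"
proof
  fix p assume "p \<in> cos_poly"
  then show "continuous_on {0..pi} p"
    unfolding cos_poly_def by (auto intro!: continuous_intros)
next
  fix x y :: real assume "x \<in> {0..pi}" "y \<in> {0..pi}" "x \<noteq> y"
  then have "cos x \<noteq> cos y" using cos_inj_pi by auto
  then show "\<exists>p\<in>cos_poly. p x \<noteq> p y"
    using cos_poly_cos[of 1 1] by (intro bexI[of _ "\<lambda>t. 1 * cos (real 1 * t)"]) auto
qed (use cos_poly_add cos_poly_mult cos_poly_cos[of _ 0] in auto)

lemma cos_poly_approx:
  assumes "continuous_on {0..pi} v" "e > 0"
  shows "\<exists>N a. \<forall>t\<in>{0..pi}. \<bar>v t - (\<Sum>m<N. a m * cos (real m * t))\<bar> < e"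
  using function_ring_on.Stone_Weierstrass_basic[OF function_ring_on_cos_poly assms]
  unfolding cos_poly_def by blast

lemma cos_nat_mult_pi_minus: "cos (real m * (pi - t)) = (-1) ^ m * cos (real m * t)"
  by (simp add: right_diff_distrib cos_diff mult.commute)

lemma cos_poly_reflection_diff:
  "(\<Sum>m<N. a m * cos (real m * t)) - (\<Sum>m<N. a m * cos (real m * (pi - t)))
     = 2 * (\<Sum>k<N. (if 2*k+1 < N then a (2*k+1) else 0) * cos (real (2*k+1) * t))"
proof -
  define c where "c m = (if m < N then a m else 0)" for m
  have "(\<Sum>m<N. a m * cos (real m * t)) - (\<Sum>m<N. a m * cos (real m * (pi - t)))
      = (\<Sum>m<2*N. c m * cos (real m * t) - c m * cos (real m * (pi - t)))"
    using cos_poly_pad[of N "2*N" a t] cos_poly_pad[of N "2*N" a "pi - t"]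
    by (simp add: c_def sum_subtractf)
  also have "\<dots> = (\<Sum>m<2*N. if even m then 0 else 2 * (c m * cos (real m * t)))"
    by (rule sum.cong) (auto simp: cos_nat_mult_pi_minus)
  also have "\<dots> = 2 * (\<Sum>k<N. c (2*k+1) * cos (real (2*k+1) * t))"
    using sum_split_even_odd[where f="\<lambda>_. 0" and n=N] by (simp add: sum_distrib_left)
  finally show ?thesis unfolding c_def .
qed

lemma continuous_on_antisymmetric_extension:
  fixes u :: "real \<Rightarrow> real"
  assumes u: "continuous_on {0..pi/2} u" and u0: "u (pi/2) = 0"
  shows "continuous_on {0..pi} (\<lambda>t. if t \<le> pi/2 then u t else - u (pi - t))" (is "continuous_on _ ?v")
proof -
  have "continuous_on {pi/2..pi} (\<lambda>t. - u (pi - t))"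
    by (intro continuous_intros continuous_on_compose2[OF u]) auto
  then have "continuous_on {pi/2..pi} ?v"
  proof (rule continuous_on_eq)
    fix t assume t: "t \<in> {pi/2..pi}"
    show "- u (pi - t) = ?v t"
    proof (cases "t \<le> pi/2")
      case True
      with t have "t = pi/2" by simp
      with u0 show ?thesis by (simp add: \<open>t = pi/2\<close>)
    qed simp
  qed
  moreover have "continuous_on {0..pi/2} ?v"
    using u by (rule continuous_on_eq) auto
  ultimately have "continuous_on ({0..pi/2} \<union> {pi/2..pi}) ?v"
    by (intro continuous_on_closed_Un) auto
  moreover have "{0..pi/2} \<union> {pi/2..pi} = {0..pi}" by auto
  ultimately show ?thesis by simp
qed

lemma odd_cos_poly_approx:
  assumes u: "continuous_on {0..pi/2} u" and u0: "u (pi/2) = 0" and e: "e > 0"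
  shows "\<exists>K b. \<forall>t\<in>{0..pi/2}. \<bar>u t - (\<Sum>k<K. b k * cos (real (2*k+1) * t))\<bar> < e"
proof -
  define v where "v t = (if t \<le> pi/2 then u t else - u (pi - t))" for t
  obtain N a where Q: "\<forall>t\<in>{0..pi}. \<bar>v t - (\<Sum>m<N. a m * cos (real m * t))\<bar> < e"
    using cos_poly_approx[OF continuous_on_antisymmetric_extension[OF u u0] e]
    unfolding v_def by blast
  show ?thesis
  proof (intro exI ballI)
    fix t :: real assume t: "t \<in> {0..pi/2}"
    have "v (pi - t) = - u t"
    proof (cases "t = pi/2")
      case True
      with u0 show ?thesis by (simp add: v_def True)
    qed (use t in \<open>simp add: v_def\<close>)
    moreover have "v t = u t" using t by (simp add: v_def)
    moreover have "t \<in> {0..pi}" "pi - t \<in> {0..pi}" using t by auto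
    ultimately have "\<bar>u t - (\<Sum>m<N. a m * cos (real m * t))\<bar> < e"
      "\<bar>- u t - (\<Sum>m<N. a m * cos (real m * (pi - t)))\<bar> < e"
      using Q by metis+
    then show "\<bar>u t - (\<Sum>k<N. (if 2*k+1 < N then a (2*k+1) else 0) * cos (real (2*k+1) * t))\<bar> < e"
      using cos_poly_reflection_diff[where N = N and a = a and t = t] by (simp add: abs_less_iff field_simps)
  qed
qed

lemma abs_less_on_symmetric_interval:
  fixes F :: "real \<Rightarrow> real"
  assumes "\<And>x. \<bar>F (-x)\<bar> = \<bar>F x\<bar>" and "\<And>x. x \<in> {0..a} \<Longrightarrow> \<bar>F x\<bar> < e" and "x \<in> {-a..a}"
  shows "\<bar>F x\<bar> < e"
  using assms(2)[of x] assms(2)[of "-x"] assms(1)[of x] assms(3) by (cases "x \<ge> 0") auto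

lemma half_cos_approx:
  assumes \<psi>: "continuous_on {-pi..pi} \<psi>" and even: "\<And>x. \<psi> (-x) = \<psi> x"
    and psi_pi: "\<psi> pi = 0" and e: "e > 0"
  shows "\<exists>K b. \<forall>x\<in>{-pi..pi}. \<bar>\<psi> x - (\<Sum>k<K. b k * cos ((real k + 1/2) * x))\<bar> < e"
proof -
  have "continuous_on {0..pi/2} (\<lambda>t. \<psi> (2 * t))"
    by (intro continuous_on_compose2[OF \<psi>] continuous_intros) auto
  then obtain K b where Kb: "\<forall>t\<in>{0..pi/2}. \<bar>\<psi> (2 * t) - (\<Sum>k<K. b k * cos (real (2*k+1) * t))\<bar> < e"
    using odd_cos_poly_approx[OF _ _ e] psi_pi by fastforce
  have "\<bar>\<psi> x - (\<Sum>k<K. b k * cos ((real k + 1/2) * x))\<bar> < e" if "x \<in> {-pi..pi}" for x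
  proof (rule abs_less_on_symmetric_interval[OF _ _ that])
    fix x :: real assume "x \<in> {0..pi}"
    then have "x/2 \<in> {0..pi/2}" by simp
    then have "\<bar>\<psi> (2 * (x/2)) - (\<Sum>k<K. b k * cos (real (2*k+1) * (x/2)))\<bar> < e"
      using Kb by blast
    moreover have "real (2*k+1) * (x/2) = (real k + 1/2) * x" for k
      by (simp add: field_simps)
    ultimately show "\<bar>\<psi> x - (\<Sum>k<K. b k * cos ((real k + 1/2) * x))\<bar> < e"
      by (simp only:) simp
  qed (simp add: even)
  then show ?thesis by blast
qed

lemma half_sin_approx:
  assumes \<psi>: "continuous_on {-pi..pi} \<psi>" and odd: "\<And>x. \<psi> (-x) = - \<psi> x" and e: "e > 0"
  shows "\<exists>K b. \<forall>x\<in>{-pi..pi}. \<bar>\<psi> x - (\<Sum>k<K. b k * sin ((real k + 1/2) * x))\<bar> < e"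
proof -
  have "continuous_on {0..pi/2} (\<lambda>t. \<psi> (pi - 2 * t))"
    by (intro continuous_on_compose2[OF \<psi>] continuous_intros) auto
  moreover have "\<psi> 0 = 0" using odd[of 0] by simp
  ultimately obtain K b where
    Kb: "\<forall>t\<in>{0..pi/2}. \<bar>\<psi> (pi - 2 * t) - (\<Sum>k<K. b k * cos (real (2*k+1) * t))\<bar> < e"
    using odd_cos_poly_approx[OF _ _ e] by fastforce
  have "\<bar>\<psi> x - (\<Sum>k<K. (-1) ^ k * b k * sin ((real k + 1/2) * x))\<bar> < e" if "x \<in> {-pi..pi}" for x
  proof (rule abs_less_on_symmetric_interval[OF _ _ that])
    fix x :: real assume "x \<in> {0..pi}"
    then have "(pi - x)/2 \<in> {0..pi/2}" by simp
    then have "\<bar>\<psi> (pi - 2 * ((pi - x)/2)) - (\<Sum>k<K. b k * cos (real (2*k+1) * ((pi - x)/2)))\<bar> < e"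
      using Kb by blast
    moreover have "cos (real (2*k+1) * ((pi - x)/2)) = (-1) ^ k * sin ((real k + 1/2) * x)" for k
    proof -
      have "real (2*k+1) * ((pi - x)/2) = real k * pi + (pi/2 - (real k + 1/2) * x)"
        by (simp add: field_simps)
      then show ?thesis by (simp only:) (simp add: cos_add cos_diff)
    qed
    moreover have "pi - 2 * ((pi - x)/2) = x" by (simp add: field_simps)
    ultimately show "\<bar>\<psi> x - (\<Sum>k<K. (-1) ^ k * b k * sin ((real k + 1/2) * x))\<bar> < e"
      by (simp only:) (simp add: ac_simps)
  qed (simp add: odd sum_negf abs_minus_commute)
  then show ?thesis by (intro exI[of _ K] exI[of _ "\<lambda>k. (-1) ^ k * b k"]) auto
qed

section \<open>Approximation in the square mean on [-pi, pi]\<close>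

definition clip :: "real \<Rightarrow> real \<Rightarrow> real" where
  "clip M y = max (-M) (min M y)"

lemma abs_clip_le: "M \<ge> 0 \<Longrightarrow> \<bar>clip M y\<bar> \<le> M"
  by (auto simp: clip_def)

lemma clip_eq_self: "\<bar>y\<bar> \<le> M \<Longrightarrow> clip M y = y"
  by (auto simp: clip_def)

lemma abs_diff_clip_le: "M \<ge> 0 \<Longrightarrow> \<bar>y - clip M y\<bar> \<le> \<bar>y\<bar>"
  by (auto simp: clip_def)

lemma clip_sign: "M \<ge> 0 \<Longrightarrow> \<bar>s\<bar> = 1 \<Longrightarrow> clip M (s * y) = s * clip M y"
  by (auto simp: clip_def abs_if max_def min_def split: if_splits)

lemma continuous_on_clip [continuous_intros]:
  "continuous_on S f \<Longrightarrow> continuous_on S (\<lambda>x. clip M (f x))"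
  unfolding clip_def by (intro continuous_intros)

lemma tendsto_clip [tendsto_intros]: "(f \<longlongrightarrow> l) F \<Longrightarrow> ((\<lambda>x. clip M (f x)) \<longlongrightarrow> clip M l) F"
  unfolding clip_def by (intro tendsto_intros)

lemma borel_measurable_clip [measurable]:
  "f \<in> borel_measurable N \<Longrightarrow> (\<lambda>x. clip M (f x)) \<in> borel_measurable N"
  unfolding clip_def by (intro borel_measurable_max borel_measurable_min borel_measurable_uminus borel_measurable_const)

lemma sq_diff_le_twice_sq_sum: "((a::real) - c)^2 \<le> 2 * (a - b)^2 + 2 * (b - c)^2"
proof -
  have "0 \<le> (a - 2*b + c)^2" by simp
  then show ?thesis by (simp add: power2_eq_square algebra_simps)
qed

lemma set_integral_sq_diff_le:
  fixes f g h :: "real \<Rightarrow> real"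
  assumes [measurable]: "A \<in> sets borel" "f \<in> borel_measurable borel" "g \<in> borel_measurable borel"
    "h \<in> borel_measurable borel"
    and fg: "set_integrable lborel A (\<lambda>x. (f x - g x)^2)"
    and gh: "set_integrable lborel A (\<lambda>x. (g x - h x)^2)"
  shows "set_integrable lborel A (\<lambda>x. (f x - h x)^2)"
    and "(LINT x:A|lborel. (f x - h x)^2)
           \<le> 2 * (LINT x:A|lborel. (f x - g x)^2) + 2 * (LINT x:A|lborel. (g x - h x)^2)"
proof -
  have sum: "set_integrable lborel A (\<lambda>x. 2 * (f x - g x)^2 + 2 * (g x - h x)^2)"
    using fg gh by (intro set_integral_add set_integrable_mult_right)
  show fh: "set_integrable lborel A (\<lambda>x. (f x - h x)^2)"
    by (rule set_integrable_bound[OF sum])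
       (auto simp: set_borel_measurable_def intro!: AE_I2 order.trans[OF _ abs_ge_self] sq_diff_le_twice_sq_sum)
  have "(LINT x:A|lborel. (f x - h x)^2) \<le> (LINT x:A|lborel. 2 * (f x - g x)^2 + 2 * (g x - h x)^2)"
    using fh sum sq_diff_le_twice_sq_sum by (rule set_integral_mono)
  also have "\<dots> = 2 * (LINT x:A|lborel. (f x - g x)^2) + 2 * (LINT x:A|lborel. (g x - h x)^2)"
    using fg gh by (simp add: set_integral_add)
  finally show "(LINT x:A|lborel. (f x - h x)^2)
           \<le> 2 * (LINT x:A|lborel. (f x - g x)^2) + 2 * (LINT x:A|lborel. (g x - h x)^2)" .
qed

lemma set_integral_sq_diff_tendsto_0:
  fixes g w :: "real \<Rightarrow> real" and s :: "nat \<Rightarrow> real \<Rightarrow> real"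
  assumes [measurable]: "A \<in> sets borel" "g \<in> borel_measurable borel" "\<And>n. s n \<in> borel_measurable borel"
    and lim: "AE x in lborel. x \<in> A \<longrightarrow> (\<lambda>n. s n x) \<longlonglongrightarrow> g x"
    and dom: "\<And>n x. x \<in> A \<Longrightarrow> \<bar>g x - s n x\<bar> \<le> w x"
    and w: "set_integrable lborel A (\<lambda>x. (w x)^2)"
  shows "(\<lambda>n. LINT x:A|lborel. (g x - s n x)^2) \<longlonglongrightarrow> 0"
proof -
  have "(\<lambda>n. integral\<^sup>L lborel (\<lambda>x. indicator A x *\<^sub>R (g x - s n x)^2))
          \<longlonglongrightarrow> integral\<^sup>L lborel (\<lambda>x::real. 0::real)"
  proof (rule integral_dominated_convergence[where w = "\<lambda>x. indicator A x *\<^sub>R (w x)^2"])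
    show "integrable lborel (\<lambda>x. indicator A x *\<^sub>R (w x)^2)"
      using w by (simp add: set_integrable_def)
    show "AE x in lborel. norm (indicator A x *\<^sub>R (g x - s n x)^2) \<le> indicator A x *\<^sub>R (w x)^2" for n
    proof (rule AE_I2)
      fix x
      have "x \<in> A \<Longrightarrow> (g x - s n x)^2 \<le> (w x)^2"
        using dom[of x n] by (metis abs_ge_zero order.trans power2_abs power_mono)
      then show "norm (indicator A x *\<^sub>R (g x - s n x)^2) \<le> indicator A x *\<^sub>R (w x)^2"
        by (simp split: split_indicator)
    qed
    show "AE x in lborel. (\<lambda>n. indicator A x *\<^sub>R (g x - s n x)^2) \<longlonglongrightarrow> 0"
      using lim
    proof eventually_elim
      case (elim x)
      then show ?case
        by (cases "x \<in> A") (auto intro!: tendsto_eq_intros)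
    qed
  qed auto
  then show ?thesis by (simp add: set_lebesgue_integral_def)
qed

lemma AE_limit_of_continuous_with_parity:
  fixes h :: "real \<Rightarrow> real"
  assumes h: "h \<in> borel_measurable borel" and parity: "\<And>x. h (-x) = s * h x" and s: "\<bar>s\<bar> = 1"
  obtains \<phi> where "\<And>n. continuous_on UNIV (\<phi> n)" "\<And>n x. \<phi> n (-x) = s * \<phi> n x"
    "AE x in lborel. (\<lambda>n. \<phi> n x) \<longlonglongrightarrow> h x"
proof -
  have "h measurable_on UNIV"
    using h by (intro lebesgue_measurable_imp_measurable_on_real measurable_completion) auto
  then obtain N \<phi> where N: "negligible N" and \<phi>: "\<And>n. continuous_on UNIV (\<phi> n)"
    and lim: "\<And>x. x \<notin> N \<Longrightarrow> (\<lambda>n. \<phi> n x) \<longlonglongrightarrow> h x"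
    unfolding measurable_on_def by auto
  have ss: "s * s = 1" using s abs_mult_self_eq[of s] by simp
  define \<phi>' where "\<phi>' n x = (\<phi> n x + s * \<phi> n (-x)) / 2" for n x
  have "continuous_on UNIV (\<phi>' n)" for n
    unfolding \<phi>'_def by (intro continuous_intros \<phi> continuous_on_compose2[OF \<phi>]) auto
  moreover have "\<phi>' n (-x) = s * \<phi>' n x" for n x
    using ss by (simp add: \<phi>'_def algebra_simps)
  moreover have "AE x in lborel. (\<lambda>n. \<phi>' n x) \<longlonglongrightarrow> h x"
  proof -
    have "negligible (uminus ` N)"
      by (rule negligible_differentiable_image_negligible[OF _ N]) (auto intro!: derivative_intros)
    then have "negligible (N \<union> uminus ` N)"
      using N by (rule negligible_Un[rotated])
    then have "N \<union> uminus ` N \<in> null_sets lebesgue"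
      by (simp only: negligible_iff_null_sets)
    moreover have "(\<lambda>n. \<phi>' n x) \<longlonglongrightarrow> h x" if "x \<notin> N \<union> uminus ` N" for x
    proof -
      have "x \<notin> N" "-x \<notin> N" using that by (auto simp: image_iff)
      then have "(\<lambda>n. \<phi>' n x) \<longlonglongrightarrow> (h x + s * (s * h x)) / 2"
        unfolding \<phi>'_def using lim[of x] lim[of "-x"] parity[of x] by (intro tendsto_intros) auto
      then show ?thesis using ss by (simp add: mult.assoc [symmetric])
    qed
    ultimately have "AE x in lebesgue. (\<lambda>n. \<phi>' n x) \<longlonglongrightarrow> h x"
      by (auto intro: AE_I')
    then show ?thesis by (simp add: AE_completion_iff)
  qed
  ultimately show ?thesis using that by blast
qed

lemma eventually_cutoff_eq_1:
  assumes "\<bar>x\<bar> < pi"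
  shows "eventually (\<lambda>n. max 0 (min 1 (real n * (pi - \<bar>x\<bar>))) = 1) sequentially"
proof (rule eventually_sequentiallyI)
  fix n assume "nat \<lceil>1 / (pi - \<bar>x\<bar>)\<rceil> \<le> n"
  then have "1 / (pi - \<bar>x\<bar>) \<le> real n" by linarith
  with assms show "max 0 (min 1 (real n * (pi - \<bar>x\<bar>))) = 1" by (simp add: field_simps)
qed

lemma AE_limit_of_bounded_continuous_vanishing_at_pi:
  fixes h :: "real \<Rightarrow> real"
  assumes h: "h \<in> borel_measurable borel" and bound: "\<And>x. \<bar>h x\<bar> \<le> M"
    and parity: "\<And>x. h (-x) = s * h x" and s: "\<bar>s\<bar> = 1"
  obtains \<psi> where "\<And>n. continuous_on UNIV (\<psi> n)" "\<And>n x. \<psi> n (-x) = s * \<psi> n x" "\<And>n. \<psi> n pi = 0"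
    "\<And>n x. \<bar>\<psi> n x\<bar> \<le> M" "AE x in lborel. x \<in> {-pi..pi} \<longrightarrow> (\<lambda>n. \<psi> n x) \<longlonglongrightarrow> h x"
proof -
  have M: "M \<ge> 0" using bound[of 0] by linarith
  obtain \<phi> where \<phi>: "\<And>n. continuous_on UNIV (\<phi> n)" and \<phi>_parity: "\<And>n x. \<phi> n (-x) = s * \<phi> n x"
    and lim: "AE x in lborel. (\<lambda>n. \<phi> n x) \<longlonglongrightarrow> h x"
    using AE_limit_of_continuous_with_parity[OF h parity s] by blast
  define cut where "cut n x = max 0 (min 1 (real n * (pi - \<bar>x\<bar>)))" for n x
  define \<psi> where "\<psi> n x = clip M (\<phi> n x) * cut n x" for n x
  have "continuous_on UNIV (\<psi> n)" for n
    unfolding \<psi>_def cut_def by (intro continuous_intros \<phi>)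
  moreover have "\<psi> n (-x) = s * \<psi> n x" for n x
    by (simp add: \<psi>_def cut_def \<phi>_parity clip_sign[OF M s])
  moreover have "\<psi> n pi = 0" for n by (simp add: \<psi>_def cut_def)
  moreover have "\<bar>\<psi> n x\<bar> \<le> M" for n x
  proof -
    have "\<bar>\<psi> n x\<bar> = \<bar>clip M (\<phi> n x)\<bar> * cut n x" by (simp add: \<psi>_def cut_def abs_mult)
    also have "\<dots> \<le> M * 1" using abs_clip_le[OF M] M by (intro mult_mono) (auto simp: cut_def)
    finally show ?thesis by simp
  qed
  moreover have "AE x in lborel. x \<in> {-pi..pi} \<longrightarrow> (\<lambda>n. \<psi> n x) \<longlonglongrightarrow> h x"
    using lim AE_lborel_singleton[of pi] AE_lborel_singleton[of "-pi"]
  proof eventually_elim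
    case (elim x)
    show ?case
    proof
      assume "x \<in> {-pi..pi}"
      with elim have "eventually (\<lambda>n. cut n x = 1) sequentially"
        unfolding cut_def by (intro eventually_cutoff_eq_1) auto
      then have "(\<lambda>n. \<psi> n x) \<longlonglongrightarrow> clip M (h x) * 1"
        unfolding \<psi>_def by (intro tendsto_intros elim tendsto_eventually)
      then show "(\<lambda>n. \<psi> n x) \<longlonglongrightarrow> h x" using clip_eq_self[OF bound] by simp
    qed
  qed
  ultimately show ?thesis using that by blast
qed

lemma bounded_L2_approx_by_continuous:
  fixes h :: "real \<Rightarrow> real"
  assumes h: "h \<in> borel_measurable borel" and bound: "\<And>x. \<bar>h x\<bar> \<le> M"
    and parity: "\<And>x. h (-x) = s * h x" and s: "\<bar>s\<bar> = 1" and e: "e > 0"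
  shows "\<exists>\<psi>. continuous_on UNIV \<psi> \<and> (\<forall>x. \<psi> (-x) = s * \<psi> x) \<and> \<psi> pi = 0 \<and> (\<forall>x. \<bar>\<psi> x\<bar> \<le> M) \<and>
           (LINT x:{-pi..pi}|lborel. (h x - \<psi> x)^2) < e"
proof -
  obtain \<psi> where \<psi>: "\<And>n. continuous_on UNIV (\<psi> n)" "\<And>n x. \<psi> n (-x) = s * \<psi> n x" "\<And>n. \<psi> n pi = 0"
    and \<psi>_bound: "\<And>n x. \<bar>\<psi> n x\<bar> \<le> M"
    and lim: "AE x in lborel. x \<in> {-pi..pi} \<longrightarrow> (\<lambda>n. \<psi> n x) \<longlonglongrightarrow> h x"
    using AE_limit_of_bounded_continuous_vanishing_at_pi[OF h bound parity s] by blast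
  have "(\<lambda>n. LINT x:{-pi..pi}|lborel. (h x - \<psi> n x)^2) \<longlonglongrightarrow> 0"
  proof (rule set_integral_sq_diff_tendsto_0[OF _ h _ lim, where w = "\<lambda>_. 2 * M"])
    show "\<psi> n \<in> borel_measurable borel" for n
      by (rule borel_measurable_continuous_onI[OF \<psi>(1)])
    show "\<bar>h x - \<psi> n x\<bar> \<le> 2 * M" for n x
      using bound[of x] \<psi>_bound[of n x] by linarith
    show "set_integrable lborel {-pi..pi} (\<lambda>x. (2 * M)^2)"
      by (rule borel_integrable_atLeastAtMost') (intro continuous_intros)
  qed simp
  from order_tendstoD(2)[OF this e] obtain n where "(LINT x:{-pi..pi}|lborel. (h x - \<psi> n x)^2) < e"
    unfolding eventually_sequentially by blast
  then show ?thesis using \<psi> \<psi>_bound by blast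
qed

lemma L2_approx_by_continuous:
  fixes g :: "real \<Rightarrow> real"
  assumes g [measurable]: "g \<in> borel_measurable borel" and g2: "set_integrable lborel {-pi..pi} (\<lambda>x. (g x)^2)"
    and parity: "\<And>x. g (-x) = s * g x" and s: "\<bar>s\<bar> = 1" and e: "e > 0"
  shows "\<exists>\<psi>. continuous_on UNIV \<psi> \<and> (\<forall>x. \<psi> (-x) = s * \<psi> x) \<and> \<psi> pi = 0 \<and>
           set_integrable lborel {-pi..pi} (\<lambda>x. (g x - \<psi> x)^2) \<and>
           (LINT x:{-pi..pi}|lborel. (g x - \<psi> x)^2) < e"
proof -
  let ?I = "{-pi..pi} :: real set"
  have clip_close: "set_integrable lborel ?I (\<lambda>x. (g x - clip M (g x))^2)" if "M \<ge> 0" for M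
    using abs_diff_clip_le[OF that] by (intro set_integrable_bound[OF g2] AE_I2)
      (auto simp: set_borel_measurable_def abs_le_square_iff[symmetric])
  have "(\<lambda>n. LINT x:?I|lborel. (g x - clip (real n) (g x))^2) \<longlonglongrightarrow> 0"
  proof (rule set_integral_sq_diff_tendsto_0[where w = "\<lambda>x. \<bar>g x\<bar>"])
    show "AE x in lborel. x \<in> ?I \<longrightarrow> (\<lambda>n. clip (real n) (g x)) \<longlonglongrightarrow> g x"
    proof (intro AE_I2 impI tendsto_eventually eventually_sequentiallyI)
      fix x n assume "nat \<lceil>\<bar>g x\<bar>\<rceil> \<le> n"
      then show "clip (real n) (g x) = g x" by (intro clip_eq_self) linarith
    qed
  qed (use g2 abs_diff_clip_le in auto)
  from order_tendstoD(2)[OF this, of "e/4"] e obtain M :: nat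
    where M: "(LINT x:?I|lborel. (g x - clip M (g x))^2) < e/4"
    unfolding eventually_sequentially by auto
  define h where "h x = clip M (g x)" for x
  have h_parity: "h (-x) = s * h x" for x
    unfolding h_def parity by (simp add: clip_sign[OF _ s])
  have h [measurable]: "h \<in> borel_measurable borel" unfolding h_def by measurable
  obtain \<psi> where \<psi>: "continuous_on UNIV \<psi>" "\<forall>x. \<psi> (-x) = s * \<psi> x" "\<psi> pi = 0"
    and \<psi>_bound: "\<forall>x. \<bar>\<psi> x\<bar> \<le> M" and \<psi>_close: "(LINT x:?I|lborel. (h x - \<psi> x)^2) < e/4"
    using bounded_L2_approx_by_continuous[OF h _ h_parity s, of M "e/4"] e
    by (auto simp: h_def abs_clip_le)
  have [measurable]: "\<psi> \<in> borel_measurable borel"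
    using \<psi>(1) by (rule borel_measurable_continuous_onI)
  have "set_integrable lborel ?I (\<lambda>x. (h x - \<psi> x)^2)"
  proof (rule set_integrable_bound[where f = "\<lambda>_. (2 * real M)^2"])
    show "set_integrable lborel ?I (\<lambda>_. (2 * real M)^2)"
      by (rule borel_integrable_atLeastAtMost') (intro continuous_intros)
    have "\<bar>h x - \<psi> x\<bar> \<le> \<bar>2 * real M\<bar>" for x
      using abs_clip_le[of "real M" "g x"] \<psi>_bound[rule_format, of x] by (simp add: h_def)
    then show "AE x in lborel. x \<in> ?I \<longrightarrow> norm ((h x - \<psi> x)^2) \<le> norm ((2 * real M)^2)"
      unfolding abs_le_square_iff by (intro AE_I2) simp
  qed (simp add: set_borel_measurable_def)
  then have "set_integrable lborel ?I (\<lambda>x. (g x - \<psi> x)^2)"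
    and "(LINT x:?I|lborel. (g x - \<psi> x)^2)
           \<le> 2 * (LINT x:?I|lborel. (g x - h x)^2) + 2 * (LINT x:?I|lborel. (h x - \<psi> x)^2)"
    using set_integral_sq_diff_le[of ?I g h \<psi>] clip_close[of M] by (simp_all add: h_def)
  moreover have "2 * (LINT x:?I|lborel. (g x - h x)^2) + 2 * (LINT x:?I|lborel. (h x - \<psi> x)^2) < e"
    using M \<psi>_close by (simp add: h_def)
  ultimately show ?thesis using \<psi> by fastforce
qed

lemma L2_approx_by_uniformly_dense:
  fixes g :: "real \<Rightarrow> real" and T :: "nat \<Rightarrow> real \<Rightarrow> real"
  assumes g [measurable]: "g \<in> borel_measurable borel" and g2: "set_integrable lborel {-pi..pi} (\<lambda>x. (g x)^2)"
    and parity: "\<And>x. g (-x) = s * g x" and s: "\<bar>s\<bar> = 1"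
    and T: "\<And>k. continuous_on UNIV (T k)"
    and uniformly_dense: "\<And>\<psi> \<eta>. continuous_on {-pi..pi} \<psi> \<Longrightarrow> (\<And>x. \<psi> (-x) = s * \<psi> x) \<Longrightarrow> \<psi> pi = 0 \<Longrightarrow>
       \<eta> > 0 \<Longrightarrow> \<exists>K b. \<forall>x\<in>{-pi..pi}. \<bar>\<psi> x - (\<Sum>k<K. b k * T k x)\<bar> < \<eta>"
    and e: "e > 0"
  shows "\<exists>K b. (LINT x:{-pi..pi}|lborel. (g x - (\<Sum>k<K. b k * T k x))^2) < e"
proof -
  let ?I = "{-pi..pi} :: real set"
  obtain \<psi> where \<psi>: "continuous_on UNIV \<psi>" "\<forall>x. \<psi> (-x) = s * \<psi> x" "\<psi> pi = 0"
    and \<psi>_int: "set_integrable lborel ?I (\<lambda>x. (g x - \<psi> x)^2)"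
    and \<psi>_close: "(LINT x:?I|lborel. (g x - \<psi> x)^2) < e/4"
    using L2_approx_by_continuous[OF g g2 parity s, of "e/4"] e by auto
  define \<eta> where "\<eta> = sqrt (e / (8 * pi))"
  have \<eta>: "\<eta> > 0" "2 * pi * \<eta>^2 = e/4" using e by (simp_all add: \<eta>_def)
  obtain K b where Kb: "\<forall>x\<in>?I. \<bar>\<psi> x - (\<Sum>k<K. b k * T k x)\<bar> < \<eta>"
    using uniformly_dense[OF continuous_on_subset[OF \<psi>(1)] _ \<psi>(3) \<eta>(1)] \<psi>(2) by blast
  define P where "P x = (\<Sum>k<K. b k * T k x)" for x
  have P: "continuous_on UNIV P" unfolding P_def by (intro continuous_intros T)
  have [measurable]: "\<psi> \<in> borel_measurable borel" "P \<in> borel_measurable borel"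
    using \<psi>(1) P by (auto intro: borel_measurable_continuous_onI)
  have P_int: "set_integrable lborel ?I (\<lambda>x. (\<psi> x - P x)^2)"
    by (rule borel_integrable_atLeastAtMost') (intro continuous_intros continuous_on_subset[OF \<psi>(1)]
        continuous_on_subset[OF P], auto)
  have "(LINT x:?I|lborel. (\<psi> x - P x)^2) \<le> (LINT x:?I|lborel. \<eta>^2)"
  proof (rule set_integral_mono[OF P_int])
    show "set_integrable lborel ?I (\<lambda>x. \<eta>^2)"
      by (rule borel_integrable_atLeastAtMost') (intro continuous_intros)
    show "(\<psi> x - P x)^2 \<le> \<eta>^2" if "x \<in> ?I" for x
      using Kb that \<eta>(1) unfolding P_def abs_le_square_iff[symmetric] by fastforce
  qed
  also have "\<dots> = 2 * pi * \<eta>^2" by (simp add: set_integral_const)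
  finally have "(LINT x:?I|lborel. (\<psi> x - P x)^2) \<le> e/4" using \<eta>(2) by simp
  moreover have "(LINT x:?I|lborel. (g x - P x)^2)
           \<le> 2 * (LINT x:?I|lborel. (g x - \<psi> x)^2) + 2 * (LINT x:?I|lborel. (\<psi> x - P x)^2)"
    using set_integral_sq_diff_le(2)[OF _ _ _ _ \<psi>_int P_int] by simp
  ultimately have "(LINT x:?I|lborel. (g x - P x)^2) < e" using \<psi>_close by simp
  then show ?thesis unfolding P_def by blast
qed

section \<open>The weight rho\<close>

lemma rho_measurable [measurable]: "rho \<in> borel_measurable borel"
  unfolding rho_def by measurable

lemma sin_half_neq_0: "x \<in> {-pi..pi} \<Longrightarrow> x \<noteq> 0 \<Longrightarrow> sin (x/2) \<noteq> 0"
  using sin_eq_0_pi[of "x/2"] pi_gt_zero by auto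

lemma rho_half_sine:
  assumes "x \<in> {-pi..pi}" "x \<noteq> 0"
  shows "(2 * sin (x/2))^2 * rho x = 1 / pi"
proof -
  have "1 - cos x = 2 * (sin (x/2))^2"
    using cos_double_sin[of "x/2"] by simp
  then have "rho x = 1 / (4 * pi * (sin (x/2))^2)"
    by (simp add: rho_def)
  then show ?thesis
    using sin_half_neq_0[OF assms] by (simp add: power_mult_distrib)
qed

lemma ip_rho_half_sine:
  fixes f g u v :: "real \<Rightarrow> real"
  assumes [measurable]: "f \<in> borel_measurable borel" "g \<in> borel_measurable borel"
    "u \<in> borel_measurable borel" "v \<in> borel_measurable borel"
    and f: "\<And>x. x \<in> {-pi..pi} \<Longrightarrow> x \<noteq> 0 \<Longrightarrow> f x = 2 * sin (x/2) * u x"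
    and g: "\<And>x. x \<in> {-pi..pi} \<Longrightarrow> x \<noteq> 0 \<Longrightarrow> g x = 2 * sin (x/2) * v x"
  shows "set_integrable lborel {-pi..pi} (\<lambda>x. f x * g x * rho x) \<longleftrightarrow>
           set_integrable lborel {-pi..pi} (\<lambda>x. u x * v x)"
    and "ip_rho f g = (LINT x:{-pi..pi}|lborel. u x * v x) / pi"
proof -
  have ae: "AE x\<in>{-pi..pi} in lborel. f x * g x * rho x = 1 / pi * (u x * v x)"
    using AE_lborel_singleton[of 0]
  proof eventually_elim
    case (elim x)
    show ?case
    proof
      assume x: "x \<in> {-pi..pi}"
      have "f x * g x * rho x = (2 * sin (x/2))^2 * rho x * (u x * v x)"
        unfolding f[OF x elim] g[OF x elim] by (simp add: power2_eq_square ac_simps)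
      also have "\<dots> = 1 / pi * (u x * v x)"
        by (simp only: rho_half_sine[OF x elim])
      finally show "f x * g x * rho x = 1 / pi * (u x * v x)" .
    qed
  qed
  have "set_integrable lborel {-pi..pi} (\<lambda>x. f x * g x * rho x) \<longleftrightarrow>
               set_integrable lborel {-pi..pi} (\<lambda>x. 1 / pi * (u x * v x))"
    by (rule set_integrable_cong_AE[OF _ _ ae]) measurable
  moreover have "ip_rho f g = (LINT x:{-pi..pi}|lborel. 1 / pi * (u x * v x))"
    unfolding ip_rho_def by (rule set_lebesgue_integral_cong_AE[OF _ _ _ ae]) measurable
  ultimately show "set_integrable lborel {-pi..pi} (\<lambda>x. f x * g x * rho x) \<longleftrightarrow>
               set_integrable lborel {-pi..pi} (\<lambda>x. u x * v x)"
    and "ip_rho f g = (LINT x:{-pi..pi}|lborel. u x * v x) / pi"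
    by (simp_all only: set_integrable_mult_right_iff[of "1/pi"] set_integral_mult_right) simp_all
qed

lemma integral_cos_int_mult:
  assumes "c \<in> \<int>"
  shows "(LINT x:{-pi..pi}|lborel. cos (c * x)) = (if c = 0 then 2 * pi else 0)"
proof (cases "c = 0")
  case False
  have "(LINT x:{-pi..pi}|lborel. cos (c * x)) = sin (c * pi) / c - sin (c * (-pi)) / c"
    unfolding set_lebesgue_integral_def using False
    by (subst integral_FTC_Icc_real[where F = "\<lambda>x. sin (c * x) / c", symmetric])
       (auto intro!: derivative_eq_intros continuous_intros simp: mult.commute)
  moreover have "sin (c * pi) = 0" using assms by (simp add: sin_times_pi_eq_0)
  ultimately show ?thesis using False by simp
qed (simp add: set_integral_const)

lemma integral_half_cos_cos:
  "(LINT x:{-pi..pi}|lborel. cos ((real j + 1/2) * x) * cos ((real k + 1/2) * x)) = (if j = k then pi else 0)"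
proof -
  have prod: "cos ((real j + 1/2) * x) * cos ((real k + 1/2) * x)
        = (cos ((real j - real k) * x) + cos ((real j + real k + 1) * x)) / 2" for x
    unfolding cos_times_cos by (simp add: algebra_simps)
  then have "(LINT x:{-pi..pi}|lborel. cos ((real j + 1/2) * x) * cos ((real k + 1/2) * x))
      = ((LINT x:{-pi..pi}|lborel. cos ((real j - real k) * x))
          + (LINT x:{-pi..pi}|lborel. cos ((real j + real k + 1) * x))) / 2"
    using borel_integrable_atLeastAtMost'[of "-pi" pi "\<lambda>x. cos (c * x)" for c]
    by (simp only: prod) (simp add: set_integral_add continuous_intros)
  also have "\<dots> = (if j = k then pi else 0)"
    using integral_cos_int_mult[of "real j - real k"] integral_cos_int_mult[of "real j + real k + 1"]
    by (simp add: Ints_diff Ints_add)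
  finally show ?thesis .
qed

lemma integral_half_sin_sin:
  "(LINT x:{-pi..pi}|lborel. sin ((real j + 1/2) * x) * sin ((real k + 1/2) * x)) = (if j = k then pi else 0)"
proof -
  have prod: "sin ((real j + 1/2) * x) * sin ((real k + 1/2) * x)
        = (cos ((real j - real k) * x) - cos ((real j + real k + 1) * x)) / 2" for x
    unfolding sin_times_sin by (simp add: algebra_simps)
  then have "(LINT x:{-pi..pi}|lborel. sin ((real j + 1/2) * x) * sin ((real k + 1/2) * x))
      = ((LINT x:{-pi..pi}|lborel. cos ((real j - real k) * x))
          - (LINT x:{-pi..pi}|lborel. cos ((real j + real k + 1) * x))) / 2"
    using borel_integrable_atLeastAtMost'[of "-pi" pi "\<lambda>x. cos (c * x)" for c]
    by (simp only: prod) (simp add: set_integral_diff continuous_intros)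
  also have "\<dots> = (if j = k then pi else 0)"
    using integral_cos_int_mult[of "real j - real k"] integral_cos_int_mult[of "real j + real k + 1"]
    by (simp add: Ints_diff Ints_add)
  finally show ?thesis .
qed

section \<open>The two bases\<close>

lemma o_fun_Suc_half_sine: "o_fun (Suc k) x = 2 * sin (x/2) * cos ((real k + 1/2) * x)"
proof -
  have "sin (real (Suc k) * x) = sin ((real k + 1/2) * x + x/2)"
    "sin ((real (Suc k) - 1) * x) = sin ((real k + 1/2) * x - x/2)"
    by (simp_all add: algebra_simps)
  then show ?thesis unfolding o_fun_def by (simp add: sin_add sin_diff)
qed

lemma e_fun_half_sine: "e_fun k x = 2 * sin (x/2) * sin ((real k + 1/2) * x)"
proof -
  have "cos (real k * x) = cos ((real k + 1/2) * x - x/2)"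
    "cos ((real k + 1) * x) = cos ((real k + 1/2) * x + x/2)"
    by (simp_all add: algebra_simps)
  then show ?thesis unfolding e_fun_def by (simp add: cos_add cos_diff)
qed

lemma sin_int_mult_periodic:
  assumes "c \<in> \<int>"
  shows "sin (c * (x + 2 * pi)) = sin (c * x)"
proof -
  have "c * (x + 2 * pi) = c * x + 2 * pi * c" by (simp add: algebra_simps)
  then show ?thesis using sin_integer_2pi[OF assms] cos_integer_2pi[OF assms] by (simp add: sin_add)
qed

lemma cos_int_mult_periodic:
  assumes "c \<in> \<int>"
  shows "cos (c * (x + 2 * pi)) = cos (c * x)"
proof -
  have "c * (x + 2 * pi) = c * x + 2 * pi * c" by (simp add: algebra_simps)
  then show ?thesis using sin_integer_2pi[OF assms] cos_integer_2pi[OF assms] by (simp add: cos_add)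
qed

lemma o_fun_in_L2rho:
  assumes "k \<ge> 1"
  shows "o_fun k \<in> L2rho"
proof -
  obtain k' where k: "k = Suc k'"
    using assms by (cases k) auto
  have "set_integrable lborel {-pi..pi} (\<lambda>x. o_fun k x * o_fun k x * rho x)"
    by (subst ip_rho_half_sine(1)[where u = "\<lambda>x. cos ((real k' + 1/2) * x)" and v = "\<lambda>x. cos ((real k' + 1/2) * x)"])
       (auto simp: k o_fun_Suc_half_sine intro!: borel_measurable_continuous_onI borel_integrable_atLeastAtMost' continuous_intros)
  moreover have "o_fun k (x + 2 * pi) = o_fun k x" for x
    unfolding o_fun_def by (simp only: sin_int_mult_periodic Ints_of_nat Ints_diff Ints_1)
  ultimately show ?thesis
    unfolding L2rho_def o_fun_def by (auto simp: power2_eq_square intro!: borel_measurable_continuous_onI continuous_intros)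
qed

lemma e_fun_in_L2rho: "e_fun k \<in> L2rho"
proof -
  have "set_integrable lborel {-pi..pi} (\<lambda>x. e_fun k x * e_fun k x * rho x)"
    by (subst ip_rho_half_sine(1)[where u = "\<lambda>x. sin ((real k + 1/2) * x)" and v = "\<lambda>x. sin ((real k + 1/2) * x)"])
       (auto simp: e_fun_half_sine intro!: borel_measurable_continuous_onI borel_integrable_atLeastAtMost' continuous_intros)
  moreover have "e_fun k (x + 2 * pi) = e_fun k x" for x
    unfolding e_fun_def by (simp only: cos_int_mult_periodic Ints_of_nat Ints_add Ints_1)
  ultimately show ?thesis
    unfolding L2rho_def e_fun_def by (auto simp: power2_eq_square intro!: borel_measurable_continuous_onI continuous_intros)
qed

lemma ip_rho_o_fun:
  assumes "j \<ge> 1" "k \<ge> 1"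
  shows "ip_rho (o_fun j) (o_fun k) = (if j = k then 1 else 0)"
proof -
  obtain j' k' where "j = Suc j'" "k = Suc k'"
    using assms by (cases j; cases k) auto
  then show ?thesis
    by (subst ip_rho_half_sine(2)[where u = "\<lambda>x. cos ((real j' + 1/2) * x)" and v = "\<lambda>x. cos ((real k' + 1/2) * x)"])
       (auto simp: o_fun_Suc_half_sine integral_half_cos_cos intro!: borel_measurable_continuous_onI continuous_intros)
qed

lemma ip_rho_e_fun: "ip_rho (e_fun j) (e_fun k) = (if j = k then 1 else 0)"
  by (subst ip_rho_half_sine(2)[where u = "\<lambda>x. sin ((real j + 1/2) * x)" and v = "\<lambda>x. sin ((real k + 1/2) * x)"])
     (auto simp: e_fun_half_sine integral_half_sin_sin intro!: borel_measurable_continuous_onI continuous_intros)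

lemma L2rho_approx_by_half_sine_multiples:
  fixes f :: "real \<Rightarrow> real" and T :: "nat \<Rightarrow> real \<Rightarrow> real"
  assumes f: "f \<in> L2rho" and parity: "\<And>x. f (-x) = - s * f x" and s: "\<bar>s\<bar> = 1"
    and T: "\<And>k. continuous_on UNIV (T k)"
    and uniformly_dense: "\<And>\<psi> \<eta>. continuous_on {-pi..pi} \<psi> \<Longrightarrow> (\<And>x. \<psi> (-x) = s * \<psi> x) \<Longrightarrow> \<psi> pi = 0 \<Longrightarrow>
       \<eta> > 0 \<Longrightarrow> \<exists>K b. \<forall>x\<in>{-pi..pi}. \<bar>\<psi> x - (\<Sum>k<K. b k * T k x)\<bar> < \<eta>"
    and \<epsilon>: "\<epsilon> > 0"
  shows "\<exists>K b. ip_rho (\<lambda>x. f x - (\<Sum>k<K. b k * (2 * sin (x/2) * T k x)))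
                     (\<lambda>x. f x - (\<Sum>k<K. b k * (2 * sin (x/2) * T k x))) < \<epsilon>"
proof -
  have [measurable]: "f \<in> borel_measurable borel" and f2: "set_integrable lborel {-pi..pi} (\<lambda>x. (f x)^2 * rho x)"
    using f by (auto simp: L2rho_def)
  define g where "g x = f x / (2 * sin (x/2))" for x
  have g [measurable]: "g \<in> borel_measurable borel" unfolding g_def by measurable
  have f_eq: "f x = 2 * sin (x/2) * g x" if "x \<in> {-pi..pi}" "x \<noteq> 0" for x
    using sin_half_neq_0[OF that] by (simp add: g_def)
  have "set_integrable lborel {-pi..pi} (\<lambda>x. g x * g x)"
    using ip_rho_half_sine(1)[OF _ _ g g f_eq f_eq] f2 by (simp add: power2_eq_square)
  then have g2: "set_integrable lborel {-pi..pi} (\<lambda>x. (g x)^2)" by (simp add: power2_eq_square)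
  have g_parity: "g (-x) = s * g x" for x
    by (simp add: g_def parity)
  have "\<exists>K b. (LINT x:{-pi..pi}|lborel. (g x - (\<Sum>k<K. b k * T k x))^2) < pi * \<epsilon>"
    by (rule L2_approx_by_uniformly_dense[OF g g2 g_parity s T]) (fact uniformly_dense, simp add: \<epsilon>)
  then obtain K b where Kb: "(LINT x:{-pi..pi}|lborel. (g x - (\<Sum>k<K. b k * T k x))^2) < pi * \<epsilon>"
    by blast
  define P where "P x = (\<Sum>k<K. b k * T k x)" for x
  have [measurable]: "P \<in> borel_measurable borel"
    unfolding P_def by (intro borel_measurable_continuous_onI continuous_intros T)
  have "(\<Sum>k<K. b k * (2 * sin (x/2) * T k x)) = 2 * sin (x/2) * P x" for x
    by (simp add: P_def sum_distrib_left ac_simps)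
  moreover have "ip_rho (\<lambda>x. f x - 2 * sin (x/2) * P x) (\<lambda>x. f x - 2 * sin (x/2) * P x)
      = (LINT x:{-pi..pi}|lborel. (g x - P x) * (g x - P x)) / pi"
    by (rule ip_rho_half_sine(2)) (auto simp: f_eq algebra_simps)
  moreover have "\<dots> < \<epsilon>"
    using Kb by (simp add: P_def power2_eq_square divide_less_eq mult.commute)
  ultimately have "ip_rho (\<lambda>x. f x - (\<Sum>k<K. b k * (2 * sin (x/2) * T k x)))
                     (\<lambda>x. f x - (\<Sum>k<K. b k * (2 * sin (x/2) * T k x))) < \<epsilon>"
    by simp
  then show ?thesis by blast
qed

lemma o_fun_dense:
  assumes f: "f \<in> L2rho" "odd_fun f" and \<epsilon>: "\<epsilon> > 0"
  shows "\<exists>F c. finite F \<and> F \<subseteq> {1..} \<and>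
           ip_rho (\<lambda>x. f x - (\<Sum>k\<in>F. c k * o_fun k x)) (\<lambda>x. f x - (\<Sum>k\<in>F. c k * o_fun k x)) < \<epsilon>"
proof -
  have "\<exists>K b. ip_rho (\<lambda>x. f x - (\<Sum>k<K. b k * (2 * sin (x/2) * cos ((real k + 1/2) * x))))
      (\<lambda>x. f x - (\<Sum>k<K. b k * (2 * sin (x/2) * cos ((real k + 1/2) * x)))) < \<epsilon>"
  proof (rule L2rho_approx_by_half_sine_multiples[where s = 1])
    show "f (-x) = - 1 * f x" for x using f(2) by (simp add: odd_fun_def)
    show "\<exists>K b. \<forall>x\<in>{-pi..pi}. \<bar>\<psi> x - (\<Sum>k<K. b k * cos ((real k + 1/2) * x))\<bar> < \<eta>"
      if "continuous_on {-pi..pi} \<psi>" "\<And>x. \<psi> (-x) = 1 * \<psi> x" "\<psi> pi = 0" "\<eta> > 0" for \<psi> \<eta>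
      using half_cos_approx[of \<psi> \<eta>] that by simp
  qed (use f \<epsilon> in \<open>auto intro!: continuous_intros\<close>)
  then obtain K b where Kb: "ip_rho (\<lambda>x. f x - (\<Sum>k<K. b k * (2 * sin (x/2) * cos ((real k + 1/2) * x))))
      (\<lambda>x. f x - (\<Sum>k<K. b k * (2 * sin (x/2) * cos ((real k + 1/2) * x)))) < \<epsilon>"
    by blast
  have "(\<Sum>k\<in>Suc ` {..<K}. b (k - 1) * o_fun k x) = (\<Sum>k<K. b k * (2 * sin (x/2) * cos ((real k + 1/2) * x)))" for x
    by (simp add: sum.reindex o_fun_Suc_half_sine)
  with Kb show ?thesis
    by (intro exI[of _ "Suc ` {..<K}"] exI[of _ "\<lambda>k. b (k - 1)"]) auto
qed

lemma e_fun_dense: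
  assumes f: "f \<in> L2rho" "even_fun f" and \<epsilon>: "\<epsilon> > 0"
  shows "\<exists>F c. finite F \<and> F \<subseteq> {0..} \<and>
           ip_rho (\<lambda>x. f x - (\<Sum>k\<in>F. c k * e_fun k x)) (\<lambda>x. f x - (\<Sum>k\<in>F. c k * e_fun k x)) < \<epsilon>"
proof -
  have "\<exists>K b. ip_rho (\<lambda>x. f x - (\<Sum>k<K. b k * (2 * sin (x/2) * sin ((real k + 1/2) * x))))
      (\<lambda>x. f x - (\<Sum>k<K. b k * (2 * sin (x/2) * sin ((real k + 1/2) * x)))) < \<epsilon>"
  proof (rule L2rho_approx_by_half_sine_multiples[where s = "-1"])
    show "f (-x) = - (-1) * f x" for x using f(2) by (simp add: even_fun_def)
    show "\<exists>K b. \<forall>x\<in>{-pi..pi}. \<bar>\<psi> x - (\<Sum>k<K. b k * sin ((real k + 1/2) * x))\<bar> < \<eta>"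
      if "continuous_on {-pi..pi} \<psi>" "\<And>x. \<psi> (-x) = -1 * \<psi> x" "\<eta> > 0" for \<psi> \<eta>
      using half_sin_approx[of \<psi> \<eta>] that by simp
  qed (use f \<epsilon> in \<open>auto intro!: continuous_intros\<close>)
  then obtain K b where "ip_rho (\<lambda>x. f x - (\<Sum>k<K. b k * (2 * sin (x/2) * sin ((real k + 1/2) * x))))
      (\<lambda>x. f x - (\<Sum>k<K. b k * (2 * sin (x/2) * sin ((real k + 1/2) * x)))) < \<epsilon>"
    by blast
  then show ?thesis
    by (intro exI[of _ "{..<K}"] exI[of _ b]) (simp add: e_fun_half_sine)
qed

theorem mainTheorem11:
  shows "complete_ONB_rho odd_fun {1..} o_fun \<and> complete_ONB_rho even_fun {0..} e_fun"
proof -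
  have "odd_fun (o_fun k)" "even_fun (e_fun k)" for k
    by (simp_all add: odd_fun_def o_fun_def even_fun_def e_fun_def)
  then show ?thesis
    unfolding complete_ONB_rho_def
    using o_fun_in_L2rho ip_rho_o_fun o_fun_dense e_fun_in_L2rho ip_rho_e_fun e_fun_dense by auto
qed

end
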